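(* Let $(X,d)$ be a complete metric space, $0<\rho<1$, and $\mu(x,y)=x\#y$ a nonexpansive, coordinatewise $\rho$-contractive 2-mean on $X$ satisfying the limited medial property. Let $n\ge2$, $m\in X$, and $\mathbf{x}=(x_1,\ldots,x_n),\mathbf{y}=(y_1,\ldots,y_n)\in X^n$ with $x_i\#y_i=m$ for all $1\le i\le n$. Then $\mu_n(\mathbf{x})\#\mu_n(\mathbf{y})=m$.
   Context: A $k$-mean is a map $\mu:X^k\to X$ with $\mu(x,\ldots,x)=x$. Nonexpansive: $d(\mu(\mathbf{x}),\mu(\mathbf{y}))\le\max_j d(x_j,y_j)$; coordinatewise $\rho$-contractive: $d(\mu(\mathbf{x}),\mu(\mathbf{y}))\le\rho\,d(x_j,y_j)$ when $\mathbf{x},\mathbf{y}$ differ only in coordinate $j$. A 2-mean $\#$ has the limited medial property if $a\#b=x\#y=m$ implies $(a\#x)\#(b\#y)=m$. $\mu_2=\mu$, and $\mu_{n+1}$ is the unique continuous $\beta$-extension of $\mu_n$, where for a $k$-mean $\mu$ the barycentric operator is $\beta(\mathbf{z})_j=\mu(z_1,\ldots,\widehat{z_j},\ldots,z_{k+1})$ and a $(k+1)$-mean $\tilde\mu$ $\beta$-extends $\mu$ if $\beta^r(\mathbf{z})\to(\tilde\mu(\mathbf{z}),\ldots,\tilde\mu(\mathbf{z}))$ for all $\mathbf{z}$. *)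

theory Defs
  imports "HOL-Analysis.Analysis"
begin

text \<open>A k-mean on X (here the whole type) is represented as a function on lists,
  only its values on lists of length k are meaningful.\<close>

definition is_kmean :: "nat \<Rightarrow> ('a list \<Rightarrow> 'a) \<Rightarrow> bool" where
  "is_kmean k f \<longleftrightarrow> (\<forall>x. f (replicate k x) = x)"

text \<open>Continuity of a k-mean on X^k (product topology), stated sequentially
  (equivalent, since X^k is metrizable).\<close>
definition kcontinuous :: "nat \<Rightarrow> ('a::metric_space list \<Rightarrow> 'a) \<Rightarrow> bool" where
  "kcontinuous k f \<longleftrightarrow>
     (\<forall>zs (s::nat \<Rightarrow> 'a list). length zs = k \<longrightarrow> (\<forall>r. length (s r) = k) \<longrightarrow>
        (\<forall>j<k. (\<lambda>r. s r ! j) \<longlonglongrightarrow> zs ! j) \<longrightarrow> (\<lambda>r. f (s r)) \<longlonglongrightarrow> f zs)"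

definition beta_op :: "nat \<Rightarrow> ('a list \<Rightarrow> 'a) \<Rightarrow> 'a list \<Rightarrow> 'a list" where
  "beta_op k f zs = map (\<lambda>j. f (take j zs @ drop (Suc j) zs)) [0..<Suc k]"

definition beta_extends :: "nat \<Rightarrow> ('a::metric_space list \<Rightarrow> 'a) \<Rightarrow> ('a list \<Rightarrow> 'a) \<Rightarrow> bool" where
  "beta_extends k f g \<longleftrightarrow>
     (\<forall>zs. length zs = Suc k \<longrightarrow>
        (\<forall>j<Suc k. (\<lambda>r. ((beta_op k f ^^ r) zs) ! j) \<longlonglongrightarrow> g zs))"

definition beta_ext :: "nat \<Rightarrow> ('a::metric_space list \<Rightarrow> 'a) \<Rightarrow> ('a list \<Rightarrow> 'a)" where
  "beta_ext k f = (THE h. \<exists>g. is_kmean (Suc k) g \<and> kcontinuous (Suc k) g \<and> beta_extends k f g \<and>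
                     h = (\<lambda>zs. if length zs = Suc k then g zs else undefined))"

primrec mu_n :: "('a::metric_space \<Rightarrow> 'a \<Rightarrow> 'a) \<Rightarrow> nat \<Rightarrow> 'a list \<Rightarrow> 'a" where
  "mu_n mu 0 = (\<lambda>xs. mu (xs ! 0) (xs ! 1))"
| "mu_n mu (Suc n) = (if Suc n \<le> 2 then (\<lambda>xs. mu (xs ! 0) (xs ! 1)) else beta_ext n (mu_n mu n))"

end

theory Submission
  imports Defs
begin

(* Adjacent entries of \<beta> z are values of f at lists differing in a single
   entry, so coordinatewise \<rho>-contractivity shrinks the length of the polygonal path
   z_0, ..., z_k by the factor \<rho>. Since f is a nonexpansive mean, each step moves every entry by
   at most that length, so the iterates \<beta>^r z converge geometrically to a diagonal tuple whose
   common entry is the \<beta>-extension of f at z.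

   Being nonexpansive, coordinatewise \<rho>-contractive and having the n-ary limited medial property
   (x_i # y_i = m for all i implies f x # f y = m; for f = # and n = 2 this is the limited medial
   property itself) are preserved entrywise by \<beta> and survive the limit, the last one because # is
   continuous. By induction all of them hold for every \<mu>_n, and the last one is the claim. *)

lemma tendsto_if_dist_le_null:
  assumes "\<And>r. dist (x r) L \<le> b r" and "b \<longlonglongrightarrow> 0"
  shows "x \<longlonglongrightarrow> L"
  by (rule tendsto_dist_iff[THEN iffD2], rule Lim_null_comparison[OF _ assms(2)]) (simp add: assms(1))

lemma dist_le_sum_dist_Suc:
  fixes s :: "nat \<Rightarrow> 'a::metric_space"
  assumes "m \<le> n"
  shows "dist (s m) (s n) \<le> (\<Sum>i=m..<n. dist (s i) (s (Suc i)))"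
  using assms
proof (induction n rule: dec_induct)
  case (step n)
  have "dist (s m) (s (Suc n)) \<le> dist (s m) (s n) + dist (s n) (s (Suc n))"
    by (rule dist_triangle)
  with step show ?case by simp
qed simp

lemma Cauchy_if_dist_Suc_le_summable:
  fixes s :: "nat \<Rightarrow> 'a::metric_space"
  assumes b: "summable b" and le: "\<And>r. dist (s r) (s (Suc r)) \<le> b r"
  shows "Cauchy s"
proof (rule metric_CauchyI)
  fix e :: real assume "0 < e"
  with b obtain N where N: "\<And>m n. N \<le> m \<Longrightarrow> norm (sum b {m..<n}) < e"
    unfolding summable_Cauchy by blast
  have close: "dist (s m) (s n) < e" if "N \<le> m" "m \<le> n" for m n
  proof -
    have "dist (s m) (s n) \<le> sum b {m..<n}"
      using dist_le_sum_dist_Suc[OF \<open>m \<le> n\<close>, of s] le by (meson order_trans sum_mono)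
    also have "\<dots> < e" using N[OF \<open>N \<le> m\<close>, of n] by simp
    finally show ?thesis .
  qed
  then have "dist (s m) (s n) < e" if "N \<le> m" "N \<le> n" for m n
    using close that by (metis dist_commute nat_le_linear)
  then show "\<exists>N. \<forall>m\<ge>N. \<forall>n\<ge>N. dist (s m) (s n) < e" by blast
qed

lemma tendsto_nonexpansive2:
  assumes g: "\<And>a b c d. dist (g a b) (g c d) \<le> max (dist a c) (dist b d)"
    and "x \<longlonglongrightarrow> a" "y \<longlonglongrightarrow> b"
  shows "(\<lambda>r. g (x r) (y r)) \<longlonglongrightarrow> g a b"
proof (rule tendsto_if_dist_le_null)
  show "dist (g (x r) (y r)) (g a b) \<le> dist (x r) a + dist (y r) b" for r
    using g[of "x r" "y r" a b] zero_le_dist[of "x r" a] zero_le_dist[of "y r" b] by linarith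
  show "(\<lambda>r. dist (x r) a + dist (y r) b) \<longlonglongrightarrow> 0"
    using tendsto_add_zero[OF assms(2,3)[THEN tendsto_dist_iff[THEN iffD1]]] .
qed

definition chain_length :: "'a::metric_space list \<Rightarrow> real" where
  "chain_length zs = (\<Sum>i<length zs - 1. dist (zs ! i) (zs ! Suc i))"

lemma dist_nth_le_chain_length:
  assumes "p < length zs" "q < length zs"
  shows "dist (zs ! p) (zs ! q) \<le> chain_length zs"
proof -
  have ordered: "dist (zs ! p) (zs ! q) \<le> chain_length zs" if "p \<le> q" "q < length zs" for p q
  proof -
    have "dist (zs ! p) (zs ! q) \<le> (\<Sum>i=p..<q. dist (zs ! i) (zs ! Suc i))"
      using dist_le_sum_dist_Suc[OF \<open>p \<le> q\<close>, of "(!) zs"] .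
    also have "\<dots> \<le> chain_length zs"
      unfolding chain_length_def by (rule sum_mono2) (use that in auto)
    finally show ?thesis .
  qed
  show ?thesis
    using ordered[of p q] ordered[of q p] assms by (cases "p \<le> q") (auto simp: dist_commute)
qed

definition list_nonexpansive :: "nat \<Rightarrow> ('a::metric_space list \<Rightarrow> 'a) \<Rightarrow> bool" where
  "list_nonexpansive k f \<longleftrightarrow>
     (\<forall>xs ys D. length xs = k \<longrightarrow> length ys = k \<longrightarrow> (\<forall>i<k. dist (xs ! i) (ys ! i) \<le> D) \<longrightarrow>
        dist (f xs) (f ys) \<le> D)"

definition coordinatewise_contractive :: "nat \<Rightarrow> real \<Rightarrow> ('a::metric_space list \<Rightarrow> 'a) \<Rightarrow> bool" where
  "coordinatewise_contractive k \<rho> f \<longleftrightarrow>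
     (\<forall>xs j y. length xs = k \<longrightarrow> j < k \<longrightarrow> dist (f xs) (f (xs[j := y])) \<le> \<rho> * dist (xs ! j) y)"

definition limited_medial :: "('a \<Rightarrow> 'a \<Rightarrow> 'a) \<Rightarrow> nat \<Rightarrow> ('a list \<Rightarrow> 'a) \<Rightarrow> bool" where
  "limited_medial mu k f \<longleftrightarrow>
     (\<forall>xs ys m. length xs = k \<longrightarrow> length ys = k \<longrightarrow> (\<forall>i<k. mu (xs ! i) (ys ! i) = m) \<longrightarrow>
        mu (f xs) (f ys) = m)"

lemma list_nonexpansiveD:
  "list_nonexpansive k f \<Longrightarrow> length xs = k \<Longrightarrow> length ys = k \<Longrightarrow>
    (\<And>i. i < k \<Longrightarrow> dist (xs ! i) (ys ! i) \<le> D) \<Longrightarrow> dist (f xs) (f ys) \<le> D"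
  unfolding list_nonexpansive_def by blast

lemma coordinatewise_contractiveD:
  "coordinatewise_contractive k \<rho> f \<Longrightarrow> length xs = k \<Longrightarrow> j < k \<Longrightarrow>
    dist (f xs) (f (xs[j := y])) \<le> \<rho> * dist (xs ! j) y"
  unfolding coordinatewise_contractive_def by blast

lemma limited_medialD:
  "limited_medial mu k f \<Longrightarrow> length xs = k \<Longrightarrow> length ys = k \<Longrightarrow>
    (\<And>i. i < k \<Longrightarrow> mu (xs ! i) (ys ! i) = m) \<Longrightarrow> mu (f xs) (f ys) = m"
  unfolding limited_medial_def by blast

lemma kcontinuous_if_list_nonexpansive:
  assumes f: "list_nonexpansive k f"
  shows "kcontinuous k f"
  unfolding kcontinuous_def
proof (intro allI impI)
  fix zs and s :: "nat \<Rightarrow> 'a list"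
  assume len: "length zs = k" "\<forall>r. length (s r) = k"
    and conv: "\<forall>j<k. (\<lambda>r. s r ! j) \<longlonglongrightarrow> zs ! j"
  show "(\<lambda>r. f (s r)) \<longlonglongrightarrow> f zs"
  proof (rule tendsto_if_dist_le_null)
    fix r
    have "dist (s r ! i) (zs ! i) \<le> (\<Sum>j<k. dist (s r ! j) (zs ! j))" if "i < k" for i
      by (rule member_le_sum) (use that in auto)
    then show "dist (f (s r)) (f zs) \<le> (\<Sum>j<k. dist (s r ! j) (zs ! j))"
      using len by (intro list_nonexpansiveD[OF f]) auto
  next
    have "(\<lambda>r. \<Sum>j<k. dist (s r ! j) (zs ! j)) \<longlonglongrightarrow> (\<Sum>j<k. 0)"
      by (intro tendsto_sum tendsto_dist_iff[THEN iffD1]) (use conv in auto)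
    then show "(\<lambda>r. \<Sum>j<k. dist (s r ! j) (zs ! j)) \<longlonglongrightarrow> 0" by simp
  qed
qed

definition remove_nth :: "nat \<Rightarrow> 'a list \<Rightarrow> 'a list" where
  "remove_nth j zs = take j zs @ drop (Suc j) zs"

lemma length_remove_nth [simp]: "j < length zs \<Longrightarrow> length (remove_nth j zs) = length zs - 1"
  by (simp add: remove_nth_def)

lemma nth_remove_nth:
  "j < length zs \<Longrightarrow> p < length zs - 1 \<Longrightarrow> remove_nth j zs ! p = (if p < j then zs ! p else zs ! Suc p)"
  by (auto simp: remove_nth_def nth_append min_def)

lemma remove_nth_eq_update_remove_Suc:
  "Suc i < length zs \<Longrightarrow> remove_nth i zs = (remove_nth (Suc i) zs)[i := zs ! Suc i]"
  by (rule nth_equalityI) (auto simp: nth_remove_nth nth_list_update)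

lemma remove_nth_update_same: "j < length zs \<Longrightarrow> remove_nth j (zs[j := y]) = remove_nth j zs"
  by (rule nth_equalityI) (auto simp: nth_remove_nth nth_list_update)

lemma remove_nth_update_greater:
  "i < j \<Longrightarrow> j < length zs \<Longrightarrow> remove_nth i (zs[j := y]) = (remove_nth i zs)[j - 1 := y]"
  by (rule nth_equalityI) (auto simp: nth_remove_nth nth_list_update)

lemma remove_nth_update_less:
  "j < i \<Longrightarrow> i < length zs \<Longrightarrow> remove_nth i (zs[j := y]) = (remove_nth i zs)[j := y]"
  by (rule nth_equalityI) (auto simp: nth_remove_nth nth_list_update)

lemma remove_nth_replicate: "j < n \<Longrightarrow> remove_nth j (replicate n x) = replicate (n - 1) x"
  by (rule nth_equalityI) (auto simp: nth_remove_nth)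

lemma length_beta_op [simp]: "length (beta_op k f zs) = Suc k"
  by (simp add: beta_op_def)

lemma nth_beta_op [simp]: "j < Suc k \<Longrightarrow> beta_op k f zs ! j = f (remove_nth j zs)"
  unfolding beta_op_def remove_nth_def by (simp del: upt_Suc)

lemma length_beta_op_funpow [simp]: "length zs = Suc k \<Longrightarrow> length ((beta_op k f ^^ r) zs) = Suc k"
  by (cases r) auto

lemma beta_op_replicate:
  "is_kmean k f \<Longrightarrow> beta_op k f (replicate (Suc k) x) = replicate (Suc k) x"
  by (rule nth_equalityI) (auto simp: is_kmean_def remove_nth_replicate simp del: replicate_Suc)

lemma dist_beta_op_le:
  assumes "list_nonexpansive k f" "length zs = Suc k" "length ws = Suc k"
    and "\<And>i. i < Suc k \<Longrightarrow> dist (zs ! i) (ws ! i) \<le> D" and "i < Suc k"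
  shows "dist (beta_op k f zs ! i) (beta_op k f ws ! i) \<le> D"
  using assms by (simp, intro list_nonexpansiveD[OF assms(1)]) (auto simp: nth_remove_nth)

lemma limited_medial_beta_op:
  assumes "limited_medial mu k f" "length zs = Suc k" "length ws = Suc k"
    and "\<And>i. i < Suc k \<Longrightarrow> mu (zs ! i) (ws ! i) = m" and "i < Suc k"
  shows "mu (beta_op k f zs ! i) (beta_op k f ws ! i) = m"
  using assms by (simp, intro limited_medialD[OF assms(1)]) (auto simp: nth_remove_nth)

lemma dist_beta_op_Suc:
  assumes f: "coordinatewise_contractive k \<rho> f" and len: "length zs = Suc k" and i: "i < k"
  shows "dist (beta_op k f zs ! i) (beta_op k f zs ! Suc i) \<le> \<rho> * dist (zs ! i) (zs ! Suc i)"
proof -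
  let ?ws = "remove_nth (Suc i) zs"
  have "dist (beta_op k f zs ! i) (beta_op k f zs ! Suc i) = dist (f ?ws) (f (?ws[i := zs ! Suc i]))"
    using i len by (simp add: remove_nth_eq_update_remove_Suc dist_commute)
  also have "\<dots> \<le> \<rho> * dist (?ws ! i) (zs ! Suc i)"
    by (rule coordinatewise_contractiveD[OF f]) (use i len in auto)
  also have "?ws ! i = zs ! i"
    using i len by (simp add: nth_remove_nth)
  finally show ?thesis .
qed

lemma dist_beta_op_update:
  assumes f: "coordinatewise_contractive k \<rho> f" and "0 \<le> \<rho>"
    and len: "length zs = Suc k" and j: "j < Suc k" and i: "i < Suc k"
  shows "dist (beta_op k f zs ! i) (beta_op k f (zs[j := y]) ! i) \<le> \<rho> * dist (zs ! j) y"
proof -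
  consider "i = j" | "i < j" | "j < i" by linarith
  then show ?thesis
  proof cases
    case 1
    then show ?thesis using \<open>0 \<le> \<rho>\<close> j len by (simp add: remove_nth_update_same)
  next
    case 2
    have "dist (f (remove_nth i zs)) (f ((remove_nth i zs)[j - 1 := y]))
        \<le> \<rho> * dist (remove_nth i zs ! (j - 1)) y"
      by (rule coordinatewise_contractiveD[OF f]) (use 2 j len in auto)
    moreover have "remove_nth i zs ! (j - 1) = zs ! j"
    proof -
      have "\<not> j - 1 < i" "Suc (j - 1) = j" using 2 by arith+
      then show ?thesis using 2 j len by (simp add: nth_remove_nth)
    qed
    ultimately show ?thesis using 2 i j len by (simp add: remove_nth_update_greater)
  next
    case 3
    have "dist (f (remove_nth i zs)) (f ((remove_nth i zs)[j := y])) \<le> \<rho> * dist (remove_nth i zs ! j) y"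
      by (rule coordinatewise_contractiveD[OF f]) (use 3 i len in auto)
    then show ?thesis using 3 i len by (simp add: remove_nth_update_less nth_remove_nth)
  qed
qed

lemma chain_length_beta_op:
  assumes "coordinatewise_contractive k \<rho> f" "length zs = Suc k"
  shows "chain_length (beta_op k f zs) \<le> \<rho> * chain_length zs"
  unfolding chain_length_def using assms
  by (simp add: sum_distrib_left del: nth_beta_op) (intro sum_mono dist_beta_op_Suc, auto)

lemma dist_beta_op_self:
  assumes mean: "is_kmean k f" and f: "list_nonexpansive k f"
    and len: "length zs = Suc k" and i: "i < Suc k"
  shows "dist (beta_op k f zs ! i) (zs ! i) \<le> chain_length zs"
proof -
  have "dist (f (remove_nth i zs)) (f (replicate k (zs ! i))) \<le> chain_length zs"
    using len i by (intro list_nonexpansiveD[OF f]) (auto simp: nth_remove_nth intro!: dist_nth_le_chain_length)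
  then show ?thesis
    using mean i by (simp add: is_kmean_def)
qed

definition beta_limit :: "nat \<Rightarrow> ('a::metric_space list \<Rightarrow> 'a) \<Rightarrow> 'a list \<Rightarrow> 'a" where
  "beta_limit k f zs = lim (\<lambda>r. (beta_op k f ^^ r) zs ! 0)"

context
  fixes k :: nat and f :: "'a::complete_space list \<Rightarrow> 'a" and \<rho> :: real
  assumes rho: "0 \<le> \<rho>" "\<rho> < 1"
    and mean: "is_kmean k f"
    and nonexp: "list_nonexpansive k f"
    and contr: "coordinatewise_contractive k \<rho> f"
begin

lemma chain_length_beta_op_funpow:
  "length zs = Suc k \<Longrightarrow> chain_length ((beta_op k f ^^ r) zs) \<le> \<rho> ^ r * chain_length zs"
proof (induction r)
  case (Suc r)
  have "chain_length ((beta_op k f ^^ Suc r) zs) \<le> \<rho> * chain_length ((beta_op k f ^^ r) zs)"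
    using chain_length_beta_op[OF contr] Suc.prems by simp
  also have "\<dots> \<le> \<rho> * (\<rho> ^ r * chain_length zs)"
    using Suc rho by (simp add: mult_left_mono)
  finally show ?case by simp
qed simp

lemma tendsto_beta_op_funpow:
  assumes len: "length zs = Suc k" and i: "i < Suc k"
  shows "(\<lambda>r. (beta_op k f ^^ r) zs ! i) \<longlonglongrightarrow> beta_limit k f zs"
proof -
  let ?z = "\<lambda>r. (beta_op k f ^^ r) zs"
  let ?b = "\<lambda>r. \<rho> ^ r * chain_length zs"
  have spread: "dist (?z r ! p) (?z r ! q) \<le> ?b r" if "p < Suc k" "q < Suc k" for r p q
    using dist_nth_le_chain_length[of p "?z r" q] chain_length_beta_op_funpow[OF len, of r] that len
    by simp
  have step: "dist (?z r ! 0) (?z (Suc r) ! 0) \<le> ?b r" for r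
  proof -
    have "dist (beta_op k f (?z r) ! 0) (?z r ! 0) \<le> chain_length (?z r)"
      by (rule dist_beta_op_self[OF mean nonexp]) (use len in simp_all)
    then show ?thesis
      using chain_length_beta_op_funpow[OF len, of r] by (simp add: dist_commute)
  qed
  have "summable ?b"
    using rho by (intro summable_mult2 summable_geometric) simp
  then have "Cauchy (\<lambda>r. ?z r ! 0)"
    using step by (rule Cauchy_if_dist_Suc_le_summable)
  then have lim0: "(\<lambda>r. ?z r ! 0) \<longlonglongrightarrow> beta_limit k f zs"
    unfolding beta_limit_def by (simp add: Cauchy_convergent_iff convergent_LIMSEQ_iff)
  show ?thesis
  proof (rule tendsto_if_dist_le_null)
    show "dist (?z r ! i) (beta_limit k f zs) \<le> ?b r + dist (?z r ! 0) (beta_limit k f zs)" for r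
      using dist_triangle[of "?z r ! i" "beta_limit k f zs" "?z r ! 0"] spread[OF i, of 0 r] by simp
    have "?b \<longlonglongrightarrow> 0"
      using rho by (intro tendsto_mult_left_zero LIMSEQ_power_zero) simp
    then show "(\<lambda>r. ?b r + dist (?z r ! 0) (beta_limit k f zs)) \<longlonglongrightarrow> 0"
      using lim0[THEN tendsto_dist_iff[THEN iffD1]] by (rule tendsto_add_zero)
  qed
qed

lemma beta_extends_beta_limit: "beta_extends k f (beta_limit k f)"
  unfolding beta_extends_def using tendsto_beta_op_funpow by blast

lemma beta_limit_beta_op:
  assumes len: "length zs = Suc k"
  shows "beta_limit k f (beta_op k f zs) = beta_limit k f zs"
proof -
  have "(\<lambda>r. (beta_op k f ^^ r) (beta_op k f zs) ! 0) \<longlonglongrightarrow> beta_limit k f (beta_op k f zs)"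
    by (rule tendsto_beta_op_funpow) simp_all
  moreover have "(\<lambda>r. (beta_op k f ^^ r) (beta_op k f zs) ! 0) \<longlonglongrightarrow> beta_limit k f zs"
    using LIMSEQ_Suc[OF tendsto_beta_op_funpow[OF len, of 0]] by (simp add: funpow_Suc_right del: funpow.simps)
  ultimately show ?thesis
    by (rule LIMSEQ_unique)
qed

lemma is_kmean_beta_limit: "is_kmean (Suc k) (beta_limit k f)"
  unfolding is_kmean_def
proof
  fix x
  have "(beta_op k f ^^ r) (replicate (Suc k) x) = replicate (Suc k) x" for r
    by (induction r) (simp_all add: beta_op_replicate[OF mean] del: replicate_Suc)
  then have "(\<lambda>r. x) \<longlonglongrightarrow> beta_limit k f (replicate (Suc k) x)"
    using tendsto_beta_op_funpow[of "replicate (Suc k) x" 0] by (simp del: replicate_Suc)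
  then show "beta_limit k f (replicate (Suc k) x) = x"
    by (rule LIMSEQ_unique[OF _ tendsto_const])
qed

lemma list_nonexpansive_beta_limit: "list_nonexpansive (Suc k) (beta_limit k f)"
  unfolding list_nonexpansive_def
proof (intro allI impI)
  fix zs ws :: "'a list" and D
  assume len: "length zs = Suc k" "length ws = Suc k"
    and D: "\<forall>i<Suc k. dist (zs ! i) (ws ! i) \<le> D"
  have "\<forall>i<Suc k. dist ((beta_op k f ^^ r) zs ! i) ((beta_op k f ^^ r) ws ! i) \<le> D" for r
  proof (induction r)
    case (Suc r)
    then show ?case
      unfolding funpow.simps o_apply
      using len by (auto intro!: dist_beta_op_le[OF nonexp] simp del: nth_beta_op)
  qed (use D in simp)
  moreover have "(\<lambda>r. dist ((beta_op k f ^^ r) zs ! 0) ((beta_op k f ^^ r) ws ! 0))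
      \<longlonglongrightarrow> dist (beta_limit k f zs) (beta_limit k f ws)"
    using len by (intro tendsto_dist tendsto_beta_op_funpow) simp_all
  ultimately show "dist (beta_limit k f zs) (beta_limit k f ws) \<le> D"
    using LIMSEQ_le_const2 by blast
qed

lemma coordinatewise_contractive_beta_limit: "coordinatewise_contractive (Suc k) \<rho> (beta_limit k f)"
  unfolding coordinatewise_contractive_def
proof (intro allI impI)
  fix zs :: "'a list" and j y
  assume len: "length zs = Suc k" and j: "j < Suc k"
  have "dist (beta_limit k f (beta_op k f zs)) (beta_limit k f (beta_op k f (zs[j := y])))
      \<le> \<rho> * dist (zs ! j) y"
    by (rule list_nonexpansiveD[OF list_nonexpansive_beta_limit])
      (use len j dist_beta_op_update[OF contr rho(1)] in auto)
  then show "dist (beta_limit k f zs) (beta_limit k f (zs[j := y])) \<le> \<rho> * dist (zs ! j) y"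
    using len by (simp add: beta_limit_beta_op)
qed

lemma beta_ext_eq_beta_limit:
  assumes len: "length zs = Suc k"
  shows "beta_ext k f zs = beta_limit k f zs"
proof -
  let ?restrict = "\<lambda>g zs. if length zs = Suc k then g zs else undefined"
  have "beta_ext k f = ?restrict (beta_limit k f)"
    unfolding beta_ext_def
  proof (rule the_equality)
    show "\<exists>g. is_kmean (Suc k) g \<and> kcontinuous (Suc k) g \<and> beta_extends k f g \<and>
        ?restrict (beta_limit k f) = ?restrict g"
      using is_kmean_beta_limit beta_extends_beta_limit
        kcontinuous_if_list_nonexpansive[OF list_nonexpansive_beta_limit] by blast
  next
    fix h
    assume "\<exists>g. is_kmean (Suc k) g \<and> kcontinuous (Suc k) g \<and> beta_extends k f g \<and> h = ?restrict g"
    then obtain g where g: "beta_extends k f g" and h: "h = ?restrict g"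
      by blast
    have "g zs = beta_limit k f zs" if "length zs = Suc k" for zs
      using g that tendsto_beta_op_funpow[OF that, of 0] LIMSEQ_unique unfolding beta_extends_def by blast
    then show "h = ?restrict (beta_limit k f)"
      using h by auto
  qed
  then show ?thesis
    using len by simp
qed

lemma limited_medial_beta_limit:
  assumes f: "limited_medial mu k f"
    and mu: "\<And>a b c d. dist (mu a b) (mu c d) \<le> max (dist a c) (dist b d)"
  shows "limited_medial mu (Suc k) (beta_limit k f)"
  unfolding limited_medial_def
proof (intro allI impI)
  fix zs ws :: "'a list" and m
  assume len: "length zs = Suc k" "length ws = Suc k"
    and m: "\<forall>i<Suc k. mu (zs ! i) (ws ! i) = m"
  have "\<forall>i<Suc k. mu ((beta_op k f ^^ r) zs ! i) ((beta_op k f ^^ r) ws ! i) = m" for r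
  proof (induction r)
    case (Suc r)
    then show ?case
      unfolding funpow.simps o_apply
      using len by (auto intro!: limited_medial_beta_op[OF f] simp del: nth_beta_op)
  qed (use m in simp)
  moreover have "(\<lambda>r. mu ((beta_op k f ^^ r) zs ! 0) ((beta_op k f ^^ r) ws ! 0))
      \<longlonglongrightarrow> mu (beta_limit k f zs) (beta_limit k f ws)"
    using len by (intro tendsto_nonexpansive2[OF mu] tendsto_beta_op_funpow) simp_all
  ultimately have "(\<lambda>r. m) \<longlonglongrightarrow> mu (beta_limit k f zs) (beta_limit k f ws)"
    by simp
  then show "mu (beta_limit k f zs) (beta_limit k f ws) = m"
    by (rule LIMSEQ_unique[OF _ tendsto_const])
qed

end

locale contractive_medial_2mean =
  fixes mu :: "'a::complete_space \<Rightarrow> 'a \<Rightarrow> 'a" and \<rho> :: real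
  assumes rho: "0 < \<rho>" "\<rho> < 1"
    and mean: "\<And>x. mu x x = x"
    and nonexp: "\<And>a b c d. dist (mu a b) (mu c d) \<le> max (dist a c) (dist b d)"
    and contr1: "\<And>a b c. dist (mu a c) (mu b c) \<le> \<rho> * dist a b"
    and contr2: "\<And>a b c. dist (mu c a) (mu c b) \<le> \<rho> * dist a b"
    and medial: "\<And>a b x y m'. mu a b = m' \<Longrightarrow> mu x y = m' \<Longrightarrow> mu (mu a x) (mu b y) = m'"
begin

definition admissible :: "nat \<Rightarrow> ('a list \<Rightarrow> 'a) \<Rightarrow> bool" where
  "admissible k f \<longleftrightarrow>
     is_kmean k f \<and> list_nonexpansive k f \<and> coordinatewise_contractive k \<rho> f \<and> limited_medial mu k f"

lemma admissible_cong: "admissible k f \<Longrightarrow> (\<And>xs. length xs = k \<Longrightarrow> g xs = f xs) \<Longrightarrow> admissible k g"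
  unfolding admissible_def is_kmean_def list_nonexpansive_def coordinatewise_contractive_def
    limited_medial_def
  by simp

lemma admissible_mu_n_2: "admissible 2 (mu_n mu 2)"
proof -
  have mu_n_2: "mu_n mu 2 = (\<lambda>xs. mu (xs ! 0) (xs ! 1))"
    by (simp add: numeral_2_eq_2)
  have "is_kmean 2 (mu_n mu 2)"
    by (simp add: mu_n_2 is_kmean_def numeral_2_eq_2 mean)
  moreover have "list_nonexpansive 2 (mu_n mu 2)"
    unfolding list_nonexpansive_def mu_n_2
  proof (intro allI impI)
    fix xs ys :: "'a list" and D
    assume "\<forall>i<2. dist (xs ! i) (ys ! i) \<le> D"
    then have "dist (xs ! 0) (ys ! 0) \<le> D" "dist (xs ! 1) (ys ! 1) \<le> D"
      by simp_all
    then show "dist (mu (xs ! 0) (xs ! 1)) (mu (ys ! 0) (ys ! 1)) \<le> D"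
      by (intro order_trans[OF nonexp]) simp
  qed
  moreover have "coordinatewise_contractive 2 \<rho> (mu_n mu 2)"
    unfolding coordinatewise_contractive_def mu_n_2
  proof (intro allI impI)
    fix xs :: "'a list" and j :: nat and y
    assume "length xs = 2" "j < 2"
    then consider "j = 0" | "j = 1"
      by linarith
    then show "dist (mu (xs ! 0) (xs ! 1)) (mu (xs[j := y] ! 0) (xs[j := y] ! 1)) \<le> \<rho> * dist (xs ! j) y"
      by cases (use \<open>length xs = 2\<close> contr1 contr2 in auto)
  qed
  moreover have "limited_medial mu 2 (mu_n mu 2)"
    unfolding limited_medial_def mu_n_2 using medial by auto
  ultimately show ?thesis
    unfolding admissible_def by blast
qed

lemma admissible_beta_ext:
  assumes "admissible k f"
  shows "admissible (Suc k) (beta_ext k f)"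
proof -
  have f: "is_kmean k f" "list_nonexpansive k f" "coordinatewise_contractive k \<rho> f" "limited_medial mu k f"
    using assms by (simp_all add: admissible_def)
  note rho' = less_imp_le[OF rho(1)] rho(2)
  have "admissible (Suc k) (beta_limit k f)"
    unfolding admissible_def
    using is_kmean_beta_limit[OF rho' f(1-3)] list_nonexpansive_beta_limit[OF rho' f(1-3)]
      coordinatewise_contractive_beta_limit[OF rho' f(1-3)]
      limited_medial_beta_limit[OF rho' f(1-3) f(4) nonexp]
    by blast
  then show ?thesis
    by (rule admissible_cong) (rule beta_ext_eq_beta_limit[OF rho' f(1-3)])
qed

lemma admissible_mu_n: "2 \<le> n \<Longrightarrow> admissible n (mu_n mu n)"
proof (induction n rule: nat_induct_at_least)
  case base
  show ?case by (rule admissible_mu_n_2)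
next
  case (Suc n)
  then show ?case by (simp add: admissible_beta_ext)
qed

end

theorem proposition8p8:
  fixes mu :: "'a::complete_space \<Rightarrow> 'a \<Rightarrow> 'a" and \<rho> :: real
    and n :: nat and m :: 'a and xs ys :: "'a list"
  assumes rho: "0 < \<rho>" "\<rho> < 1"
    and mean: "\<And>x. mu x x = x"
    and nonexp: "\<And>a b c d. dist (mu a b) (mu c d) \<le> max (dist a c) (dist b d)"
    and contr1: "\<And>a b c. dist (mu a c) (mu b c) \<le> \<rho> * dist a b"
    and contr2: "\<And>a b c. dist (mu c a) (mu c b) \<le> \<rho> * dist a b"
    and medial: "\<And>a b x y m'. mu a b = m' \<Longrightarrow> mu x y = m' \<Longrightarrow> mu (mu a x) (mu b y) = m'"
    and n: "2 \<le> n"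
    and len: "length xs = n" "length ys = n"
    and pairs: "\<And>i. i < n \<Longrightarrow> mu (xs ! i) (ys ! i) = m"
  shows "mu (mu_n mu n xs) (mu_n mu n ys) = m"
proof -
  interpret contractive_medial_2mean mu \<rho>
    using rho mean nonexp contr1 contr2 medial by unfold_locales
  have "limited_medial mu n (mu_n mu n)"
    using admissible_mu_n[OF n] by (simp add: admissible_def)
  then show ?thesis
    using len pairs by (rule limited_medialD)
qed

end
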